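(* For every $0 <\delta<1$ there exists $C_\delta>0$ such that $$|\langle y,\overline{\nabla f(x)}\rangle - \langle y', \overline{\nabla f(x')}\rangle|\le C_\delta\, \|f\|_{\mathcal B(B_E)}\Big(\|x- x'\|+\frac{1-\delta}{2}\|y-y'\|\Big)$$ whenever $x,x'\in \delta B_E$, $\|y\|\le 1$, $\|y'\|\le 1$, and $f\in \mathcal B(B_E)$.
   Context: $E$ is a complex Hilbert space of arbitrary dimension with inner product $\langle\cdot,\cdot\rangle$ and open unit ball $B_E$; fix an orthonormal basis $(e_k)$ and set $\overline z=\sum_k\overline{z_k}e_k$ for $z=\sum_k z_ke_k$. For analytic $f:B_E\to\mathbb C$, $\nabla f(x)\in E$ is defined by $f'(x)(y)=\langle y,\overline{\nabla f(x)}\rangle$, so $\langle y,\overline{\nabla f(x)}\rangle=f'(x)(y)$. The Bloch space $\mathcal B(B_E)$ consists of analytic $f$ with $\|f\|_{\mathcal B(B_E)}=\sup_{x\in B_E}(1-\|x\|^2)\|f'(x)\|<\infty$. *)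

theory Defs
  imports "HOL-Analysis.Analysis"
begin

text \<open>A complex Hilbert space E is modelled as a real Hilbert space
  (type class real_inner + complete_space) together with an orthogonal complex
  structure J (multiplication by the imaginary unit). The complex scalar
  multiplication is (a + i b) x = a x + b (J x), the complex inner product is
  determined by the real one, and the norm is the same.\<close>

definition complex_structure :: "('a::real_inner \<Rightarrow> 'a) \<Rightarrow> bool" where
  "complex_structure J \<longleftrightarrow> linear J \<and> (\<forall>x. J (J x) = - x) \<and>
     (\<forall>x y. inner (J x) (J y) = inner x y)"

text \<open>Open unit ball B_E and analyticity on it: f is Frechet differentiable at
  every point of B_E with complex-linear derivative (equivalent to holomorphy
  in Banach spaces).\<close>

definition analytic_ball :: "('a::real_inner \<Rightarrow> 'a) \<Rightarrow> ('a \<Rightarrow> complex) \<Rightarrow> bool" where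
  "analytic_ball J f \<longleftrightarrow>
     (\<forall>x\<in>ball 0 1. \<exists>D. (f has_derivative D) (at x) \<and> (\<forall>y. D (J y) = \<i> * D y))"

text \<open>The derivative f'(x), i.e. y \<mapsto> f'(x)(y) = <y, conj(grad f(x))>.\<close>

definition dF :: "('a::real_normed_vector \<Rightarrow> complex) \<Rightarrow> 'a \<Rightarrow> 'a \<Rightarrow> complex" where
  "dF f x = frechet_derivative f (at x)"

definition bloch_norm :: "('a::real_inner \<Rightarrow> complex) \<Rightarrow> real" where
  "bloch_norm f = (SUP x\<in>ball 0 1. (1 - (norm x)^2) * onorm (dF f x))"

definition bloch_space :: "('a::real_inner \<Rightarrow> 'a) \<Rightarrow> ('a \<Rightarrow> complex) set" where
  "bloch_space J = {f. analytic_ball J f \<and>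
      bdd_above ((\<lambda>x. (1 - (norm x)^2) * onorm (dF f x)) ` ball 0 1)}"

end

theory Submission
  imports Defs "HOL-Complex_Analysis.Complex_Analysis"
begin

text \<open>Write \<open>\<rho> = (1 + \<delta>)/2\<close> and \<open>r = (1 - \<delta>)/2\<close>, so that \<open>\<delta> + r = \<rho>\<close>. On the ball of
  radius \<open>\<rho>\<close> the derivative of \<open>f\<close> is bounded by \<open>M = \<parallel>f\<parallel>/(1 - \<rho>\<^sup>2)\<close>, which controls the
  \<open>y\<close>-variation, and makes \<open>f\<close> \<open>M\<close>-Lipschitz there. For the \<open>x\<close>-variation, the function
  \<open>\<mu> \<mapsto> f(x + \<mu> y) - f(x' + \<mu> y)\<close> is holomorphic on the disc of radius \<open>1 - \<delta>\<close>, bounded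
  by \<open>M \<parallel>x - x'\<parallel>\<close> on the circle of radius \<open>r\<close>, and its derivative at \<open>0\<close> is
  \<open>f'(x) y - f'(x') y\<close>; Cauchy's inequality bounds the latter by \<open>M \<parallel>x - x'\<parallel> / r\<close>.\<close>

definition cscale :: "('a::real_inner \<Rightarrow> 'a) \<Rightarrow> complex \<Rightarrow> 'a \<Rightarrow> 'a" where
  "cscale J c y = Re c *\<^sub>R y + Im c *\<^sub>R J y"

lemma norm_cscale:
  assumes "complex_structure J"
  shows "norm (cscale J c y) = cmod c * norm y"
proof -
  have JJ: "inner (J y) (J y) = inner y y" and Jn: "J (J y) = - y"
    using assms unfolding complex_structure_def by auto
  have "inner y (J y) = inner (J y) (J (J y))"
    using assms unfolding complex_structure_def by metis
  also have "\<dots> = - inner (J y) y" using Jn by simp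
  finally have orth: "inner y (J y) = 0" by (simp add: inner_commute)
  have "(norm (cscale J c y))\<^sup>2 = (Re c)\<^sup>2 * inner y y + (Im c)\<^sup>2 * inner (J y) (J y)
       + 2 * Re c * Im c * inner y (J y)"
    unfolding cscale_def power2_norm_eq_inner
    by (simp add: inner_add_left inner_add_right inner_commute[of "J y" y] algebra_simps
        power2_eq_square)
  also have "\<dots> = ((Re c)\<^sup>2 + (Im c)\<^sup>2) * (norm y)\<^sup>2"
    using JJ orth by (simp add: power2_norm_eq_inner algebra_simps)
  also have "\<dots> = (cmod c * norm y)\<^sup>2"
    by (simp add: cmod_power2 power_mult_distrib)
  finally show ?thesis by (simp add: power2_eq_iff_nonneg)
qed

lemma norm_add_cscale_le:
  assumes "complex_structure J" "norm y \<le> 1"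
  shows "norm (p + cscale J \<mu> y) \<le> norm p + cmod \<mu>"
proof -
  have "norm (p + cscale J \<mu> y) \<le> norm p + cmod \<mu> * norm y"
    using norm_triangle_ineq[of p "cscale J \<mu> y"] norm_cscale[OF assms(1)] by simp
  also have "\<dots> \<le> norm p + cmod \<mu>" using assms(2) by (simp add: mult_left_le)
  finally show ?thesis .
qed

lemma bloch_space_has_derivative:
  assumes "f \<in> bloch_space J" "z \<in> ball 0 1"
  shows "(f has_derivative dF f z) (at z)" and "dF f z (J y) = \<i> * dF f z y"
proof -
  obtain D where D: "(f has_derivative D) (at z)" "\<And>y. D (J y) = \<i> * D y"
    using assms unfolding bloch_space_def analytic_ball_def by blast
  moreover have "D = dF f z" unfolding dF_def using frechet_derivative_at[OF D(1)] .
  ultimately show "(f has_derivative dF f z) (at z)" "dF f z (J y) = \<i> * dF f z y" by auto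
qed

lemma weighted_onorm_dF_le_bloch_norm:
  assumes "f \<in> bloch_space J" "z \<in> ball 0 1"
  shows "(1 - (norm z)\<^sup>2) * onorm (dF f z) \<le> bloch_norm f"
  unfolding bloch_norm_def using assms unfolding bloch_space_def by (intro cSUP_upper) auto

lemma bloch_norm_nonneg:
  assumes "f \<in> bloch_space J"
  shows "0 \<le> bloch_norm f"
proof -
  have "bounded_linear (dF f 0)"
    using bloch_space_has_derivative(1)[OF assms] has_derivative_bounded_linear by force
  then show ?thesis
    using weighted_onorm_dF_le_bloch_norm[OF assms, of 0] onorm_pos_le by force
qed

lemma onorm_dF_le:
  assumes f: "f \<in> bloch_space J" and "norm z \<le> \<rho>" "\<rho> < 1"
  shows "onorm (dF f z) \<le> bloch_norm f / (1 - \<rho>\<^sup>2)"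
proof -
  have z: "z \<in> ball 0 1" using assms by simp
  have pos: "0 < 1 - \<rho>\<^sup>2"
    using power_strict_mono[of \<rho> 1 2] assms norm_ge_zero[of z] by auto
  have "bounded_linear (dF f z)"
    using bloch_space_has_derivative(1)[OF f z] has_derivative_bounded_linear by blast
  then have "(1 - \<rho>\<^sup>2) * onorm (dF f z) \<le> (1 - (norm z)\<^sup>2) * onorm (dF f z)"
    using assms by (intro mult_right_mono onorm_pos_le) (auto simp: power_mono)
  also have "\<dots> \<le> bloch_norm f" by (rule weighted_onorm_dF_le_bloch_norm[OF f z])
  finally have "(1 - \<rho>\<^sup>2) * onorm (dF f z) \<le> bloch_norm f" .
  then show ?thesis using pos by (simp add: field_simps)
qed

lemma cmod_dF_le:
  assumes "f \<in> bloch_space J" "norm z \<le> \<rho>" "\<rho> < 1"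
  shows "cmod (dF f z v) \<le> bloch_norm f / (1 - \<rho>\<^sup>2) * norm v"
proof -
  have "bounded_linear (dF f z)"
    using assms bloch_space_has_derivative(1)[OF assms(1)] has_derivative_bounded_linear by force
  then have "cmod (dF f z v) \<le> onorm (dF f z) * norm v" by (rule onorm)
  also have "\<dots> \<le> bloch_norm f / (1 - \<rho>\<^sup>2) * norm v"
    using onorm_dF_le[OF assms] by (intro mult_right_mono) auto
  finally show ?thesis .
qed

lemma bloch_lipschitz_on_ball:
  assumes f: "f \<in> bloch_space J" and "p \<in> ball 0 \<rho>" "q \<in> ball 0 \<rho>" "\<rho> < 1"
  shows "cmod (f p - f q) \<le> bloch_norm f / (1 - \<rho>\<^sup>2) * norm (p - q)"
proof (rule differentiable_bound[of "ball 0 \<rho>" f "dF f"])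
  show "(f has_derivative dF f z) (at z within ball 0 \<rho>)" if "z \<in> ball 0 \<rho>" for z
    using bloch_space_has_derivative(1)[OF f, of z] that assms(4) has_derivative_at_withinI
    by auto
  show "onorm (dF f z) \<le> bloch_norm f / (1 - \<rho>\<^sup>2)" if "z \<in> ball 0 \<rho>" for z
    using onorm_dF_le[OF f _ assms(4)] that by simp
qed (use assms in auto)

lemma has_field_derivative_along_complex_line:
  assumes J: "complex_structure J" and f: "f \<in> bloch_space J"
    and z: "x + cscale J \<mu> y \<in> ball 0 1"
  shows "((\<lambda>\<mu>. f (x + cscale J \<mu> y)) has_field_derivative dF f (x + cscale J \<mu> y) y) (at \<mu>)"
proof -
  let ?z = "x + cscale J \<mu> y"
  have bl: "bounded_linear (\<lambda>h. cscale J h y)"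
    unfolding cscale_def
    by (intro bounded_linear_add
        bounded_linear_compose[OF bounded_linear_scaleR_left bounded_linear_Re]
        bounded_linear_compose[OF bounded_linear_scaleR_left bounded_linear_Im])
  have "((\<lambda>\<mu>. x + cscale J \<mu> y) has_derivative (\<lambda>h. cscale J h y)) (at \<mu>)"
    using bl by (auto intro!: derivative_eq_intros bounded_linear.has_derivative[OF bl])
  from has_derivative_compose[OF this bloch_space_has_derivative(1)[OF f z]]
  have "((\<lambda>\<mu>. f (x + cscale J \<mu> y)) has_derivative (\<lambda>h. dF f ?z (cscale J h y))) (at \<mu>)" .
  moreover have "dF f ?z (cscale J h y) = dF f ?z y * h" for h
  proof -
    have lin: "linear (dF f ?z)"
      using bloch_space_has_derivative(1)[OF f z] has_derivative_linear by blast
    have "dF f ?z (cscale J h y) = Re h *\<^sub>R dF f ?z y + Im h *\<^sub>R dF f ?z (J y)"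
      unfolding cscale_def[of J h y] by (simp add: linear_add[OF lin] linear_scale[OF lin])
    also have "\<dots> = (complex_of_real (Re h) + \<i> * complex_of_real (Im h)) * dF f ?z y"
      using bloch_space_has_derivative(2)[OF f z] by (simp add: scaleR_conv_of_real algebra_simps)
    finally show ?thesis by (simp add: complex_eq[symmetric] mult.commute)
  qed
  ultimately show ?thesis unfolding has_field_derivative_def by simp
qed

lemma dF_diff_base_point_le:
  assumes J: "complex_structure J" and f: "f \<in> bloch_space J"
    and x: "norm x < \<delta>" and x': "norm x' < \<delta>" and y: "norm y \<le> 1"
    and r: "0 < r" "\<delta> + r < 1"
  shows "cmod (dF f x y - dF f x' y) \<le> bloch_norm f / (1 - (\<delta> + r)\<^sup>2) * norm (x - x') / r"
proof -
  define \<psi> where "\<psi> = (\<lambda>\<mu>. f (x + cscale J \<mu> y) - f (x' + cscale J \<mu> y))"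
  have der: "(\<psi> has_field_derivative dF f (x + cscale J \<mu> y) y - dF f (x' + cscale J \<mu> y) y)
      (at \<mu>)" if "cmod \<mu> < 1 - \<delta>" for \<mu>
    unfolding \<psi>_def using norm_add_cscale_le[OF J y, of _ \<mu>] x x' that
    by (intro DERIV_diff has_field_derivative_along_complex_line[OF J f])
      (smt (verit) mem_ball_0)+
  have hol: "\<psi> holomorphic_on ball 0 (1 - \<delta>)"
    unfolding holomorphic_on_def
    using der field_differentiable_at_within field_differentiable_def by fastforce
  have on_circle: "cmod (\<psi> \<mu>) \<le> bloch_norm f / (1 - (\<delta> + r)\<^sup>2) * norm (x - x')"
    if "norm (0 - \<mu>) = r" for \<mu>
  proof -
    have "p + cscale J \<mu> y \<in> ball 0 (\<delta> + r)" if "norm p < \<delta>" for p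
      using norm_add_cscale_le[OF J y, of p \<mu>] \<open>norm (0 - \<mu>) = r\<close> that by simp
    then show ?thesis
      using bloch_lipschitz_on_ball[OF f _ _ r(2)] x x' unfolding \<psi>_def by fastforce
  qed
  have "norm ((deriv ^^ 1) \<psi> 0) \<le> fact 1 * (bloch_norm f / (1 - (\<delta> + r)\<^sup>2) * norm (x - x')) / r ^ 1"
    using r by (intro Cauchy_inequality on_circle holomorphic_on_subset[OF hol]
        continuous_on_subset[OF holomorphic_on_imp_continuous_on[OF hol]]) auto
  moreover have "deriv \<psi> 0 = dF f x y - dF f x' y"
    using DERIV_imp_deriv[OF der[of 0]] r x by (simp add: cscale_def)
  ultimately show ?thesis by simp
qed

theorem lemma4p12:
  fixes J :: "'a::{real_inner, complete_space} \<Rightarrow> 'a"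
  assumes "complex_structure J"
  shows "\<forall>\<delta>::real. 0 < \<delta> \<and> \<delta> < 1 \<longrightarrow>
    (\<exists>C>0. \<forall>f x x' y y'. f \<in> bloch_space J \<and> norm x < \<delta> \<and> norm x' < \<delta> \<and>
        norm y \<le> 1 \<and> norm y' \<le> 1 \<longrightarrow>
        cmod (dF f x y - dF f x' y') \<le>
          C * bloch_norm f * (norm (x - x') + (1 - \<delta>) / 2 * norm (y - y')))"
proof (intro allI impI)
  fix \<delta> :: real
  assume \<delta>: "0 < \<delta> \<and> \<delta> < 1"
  define r where "r = (1 - \<delta>) / 2"
  define Q where "Q = 1 - (\<delta> + r)\<^sup>2"
  have r: "0 < r" "\<delta> + r < 1" using \<delta> by (auto simp: r_def field_simps)
  then have Q: "0 < Q" using \<delta> power_strict_mono[of "\<delta> + r" 1 2] by (auto simp: Q_def)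
  show "\<exists>C>0. \<forall>f x x' y y'. f \<in> bloch_space J \<and> norm x < \<delta> \<and> norm x' < \<delta> \<and>
        norm y \<le> 1 \<and> norm y' \<le> 1 \<longrightarrow>
        cmod (dF f x y - dF f x' y') \<le>
          C * bloch_norm f * (norm (x - x') + (1 - \<delta>) / 2 * norm (y - y'))"
  proof (intro exI[of _ "1 / (Q * r)"] conjI allI impI)
    fix f :: "'a \<Rightarrow> complex" and x x' y y' :: 'a
    assume H: "f \<in> bloch_space J \<and> norm x < \<delta> \<and> norm x' < \<delta> \<and> norm y \<le> 1 \<and> norm y' \<le> 1"
    define M where "M = bloch_norm f / Q"
    have "dF f x y - dF f x' y' = (dF f x y - dF f x' y) + dF f x' (y - y')"
      using H bloch_space_has_derivative(1)[of f J x'] \<delta>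
      by (simp add: has_derivative_linear linear_diff)
    then have "cmod (dF f x y - dF f x' y') \<le> cmod (dF f x y - dF f x' y) + cmod (dF f x' (y - y'))"
      by (metis norm_triangle_ineq)
    also have "\<dots> \<le> M * norm (x - x') / r + M * norm (y - y')"
      using dF_diff_base_point_le[OF assms _ _ _ _ r(1,2), of f x x' y]
        cmod_dF_le[of f J x' "\<delta> + r" "y - y'"] H r
      unfolding M_def Q_def by (intro add_mono) auto
    also have "\<dots> = 1 / (Q * r) * bloch_norm f * (norm (x - x') + r * norm (y - y'))"
      using r Q by (simp add: M_def field_simps)
    finally show "cmod (dF f x y - dF f x' y') \<le> 1 / (Q * r) * bloch_norm f *
        (norm (x - x') + (1 - \<delta>) / 2 * norm (y - y'))" by (simp add: r_def)
  qed (use r Q in simp)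
qed

end
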